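(* Fix an integer $m\ge1$. Then as $n\to\infty$: (a) $P\big(W_{n-m}=W_{(n)}\big)=P(X_m=M)+O(1/n)$; (b) $P\big(D_{n-m}=D_{(n)}\big)=P(X_m=M)+o(1)$.
   Context: For each $n\ge1$, let $W_0,\dots,W_{n-1}$ be independent with $W_j\sim\mathrm{Exp}\big(\frac{n-j}{n}\big)$ (exponential with rate $\frac{n-j}{n}$), and $W_{(n)}=\max_{0\le j\le n-1}W_j$. Let $D_0,\dots,D_{n-1}$ be independent geometric random variables with $P(D_j=r)=\big(\frac{j}{n}\big)^{r-1}\frac{n-j}{n}$ for $r=1,2,\dots$, and $D_{(n)}=\max_{0\le j\le n-1}D_j$. Let $(X_i)_{i\ge1}$ be independent with $X_i\sim\mathrm{Exp}(i)$ (rate $i$) and $M=\sup_{i\ge1}X_i$. *)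

theory Defs
  imports "HOL-Probability.Probability" "HOL-Library.Landau_Symbols"
begin

definition W_space :: "nat \<Rightarrow> (nat \<Rightarrow> real) measure" where
  "W_space n = (\<Pi>\<^sub>M j\<in>{..<n}. density lborel (exponential_density (real (n - j) / real n)))"

definition pW :: "nat \<Rightarrow> nat \<Rightarrow> real" where
  "pW n m = measure (W_space n)
     {\<omega> \<in> space (W_space n). \<omega> (n - m) = Max (\<omega> ` {..<n})}"

text \<open>Joint law of (D_0,...,D_{n-1}): independent, P(D_j = r) = (j/n)^(r-1) (n-j)/n, r \<ge> 1.
  D_j - 1 is geometric (number of failures) with success probability (n-j)/n.\<close>
definition D_space :: "nat \<Rightarrow> (nat \<Rightarrow> nat) measure" where
  "D_space n = (\<Pi>\<^sub>M j\<in>{..<n}. measure_pmf (map_pmf Suc (geometric_pmf (real (n - j) / real n))))"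

definition pD :: "nat \<Rightarrow> nat \<Rightarrow> real" where
  "pD n m = measure (D_space n)
     {\<omega> \<in> space (D_space n). \<omega> (n - m) = Max (\<omega> ` {..<n})}"

definition X_space :: "(nat \<Rightarrow> real) measure" where
  "X_space = (\<Pi>\<^sub>M i\<in>{1..}. density lborel (exponential_density (real i)))"

definition pX :: "nat \<Rightarrow> real" where
  "pX m = measure X_space {\<omega> \<in> space X_space. \<omega> m = (SUP i\<in>{1..}. \<omega> i)}"

end

theory Submission
  imports Defs
begin

text \<open>If independent variables \<open>\<xi>\<^sub>j\<close> have distribution functions \<open>F\<^sub>j\<close>, then
  \<open>\<xi>\<^sub>k\<close> is maximal with probability \<open>E \<Prod>\<^bsub>j\<noteq>k\<^esub> F\<^sub>j(\<xi>\<^sub>k)\<close>. Multiplying the \<open>W\<^sub>j\<close> by \<open>n\<close> turns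
  \<open>W\<^bsub>n-m\<^esub>\<close> into an \<open>Exp(m)\<close> variable and the others into \<open>Exp(i)\<close> variables, \<open>i \<in> {1..n} - {m}\<close>,
  so \<open>P(W\<^bsub>n-m\<^esub> = max\<^sub>j W\<^sub>j)\<close> is exactly the probability that \<open>X\<^sub>m\<close> is the largest of
  \<open>X\<^sub>1, \<dots>, X\<^sub>n\<close>. These truncations decrease to \<open>P(X\<^sub>m = M)\<close>; the products of distribution
  functions for the \<open>n\<close>-th and the \<open>N\<close>-th truncation differ by at most \<open>2 e\<^bsup>-(n+1)x\<^esup>\<close>, so the
  truncation error is at most \<open>2m/(m+n+1)\<close>.

  A geometric variable with success probability \<open>p\<close> has the law of \<open>\<lceil>E\<rceil>\<close> for
  \<open>E \<sim> Exp(-ln(1 - p))\<close>. Comparing \<open>\<Sum>\<^sub>r P(D\<^bsub>n-m\<^esub> = r) \<Prod>\<^sub>j P(D\<^sub>j \<le> r)\<close> with the corresponding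
  exponential integral bounds \<open>P(D\<^bsub>n-m\<^esub> = max\<^sub>j D\<^sub>j)\<close> below by the \<open>n\<close>-th truncation and above
  by the \<open>K\<close>-th one, up to errors \<open>O((K + m)/n)\<close>; letting \<open>n \<rightarrow> \<infinity>\<close> and then \<open>K \<rightarrow> \<infinity>\<close> gives
  the limit.\<close>

lemma prod_superset_le:
  fixes f :: "'a \<Rightarrow> real"
  assumes "finite B" "A \<subseteq> B" "\<And>i. i \<in> B \<Longrightarrow> 0 \<le> f i \<and> f i \<le> 1"
  shows "prod f B \<le> prod f A"
proof -
  have "prod f B = prod f A * prod f (B - A)"
    using assms by (metis prod.subset_diff mult.commute)
  also have "\<dots> \<le> prod f A"
    using assms by (intro mult_left_le prod_le_1 prod_nonneg) auto
  finally show ?thesis .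
qed

lemma one_minus_prod_one_minus_le_sum:
  fixes a :: "'a \<Rightarrow> real"
  assumes "finite B" "\<And>i. i \<in> B \<Longrightarrow> 0 \<le> a i \<and> a i \<le> 1"
  shows "1 - (\<Prod>i\<in>B. 1 - a i) \<le> (\<Sum>i\<in>B. a i)"
  using assms
proof (induction B rule: finite_induct)
  case (insert j B)
  have "a j * (\<Prod>i\<in>B. 1 - a i) \<le> a j"
    using insert.prems by (intro mult_left_le prod_le_1 prod_nonneg) auto
  then show ?case using insert by (simp add: algebra_simps)
qed simp

lemma prod_one_minus_power_le:
  fixes q :: real
  assumes q: "0 \<le> q" "q \<le> 1" and A: "finite A" "i \<in> A" "i \<in> {1, 2}"
  shows "(\<Prod>a\<in>A. 1 - q^a) \<le> 2 * (1 - q)"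
proof -
  have "(\<Prod>a\<in>A. 1 - q^a) \<le> (\<Prod>a\<in>{i}. 1 - q^a)"
    using q A by (intro prod_superset_le) (auto simp: power_le_one)
  also have "\<dots> \<le> 2 * (1 - q)"
  proof (cases "i = 1")
    case False
    with A have "1 - q^i = (1 - q) * (1 + q)" by (auto simp: power2_eq_square algebra_simps)
    also have "\<dots> \<le> (1 - q) * 2" using q by (intro mult_left_mono) auto
    finally show ?thesis by simp
  qed (use q in simp)
  finally show ?thesis .
qed

lemma prod_one_minus_power_diff_le:
  fixes q :: real
  assumes q: "0 \<le> q" "q \<le> 1" and m: "1 \<le> m" "m \<le> n" and n: "2 \<le> n" "n \<le> N"
  shows "(\<Prod>i\<in>{1..n}-{m}. 1 - q^i) - (\<Prod>i\<in>{1..N}-{m}. 1 - q^i) \<le> 2 * q^(n+1)"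
proof -
  define A where "A = {1..n}-{m}"
  define PA where "PA = (\<Prod>i\<in>A. 1 - q^i)"
  define PB where "PB = (\<Prod>i\<in>{n+1..N}. 1 - q^i)"
  have unit: "0 \<le> 1 - q^i \<and> 1 - q^i \<le> 1" for i :: nat
    using q by (auto simp: power_le_one)
  have AB: "{1..N}-{m} = A \<union> {n+1..N}"
    using m n by (auto simp: A_def)
  have split: "(\<Prod>i\<in>{1..N}-{m}. 1 - q^i) = PA * PB"
    unfolding PA_def PB_def AB by (rule prod.union_disjoint) (auto simp: A_def)
  have PA_nonneg: "0 \<le> PA"
    unfolding PA_def using unit by (auto intro: prod_nonneg)
  \<comment> \<open>since \<open>n \<ge> 2\<close>, the factor with \<open>i = 1\<close> or with \<open>i = 2\<close> is present in \<open>PA\<close>\<close>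
  have PA_le: "PA \<le> 2 * (1 - q)"
    unfolding PA_def using q n m
    by (intro prod_one_minus_power_le[where i="if m = 1 then 2 else 1"]) (auto simp: A_def)
  have "1 - PB \<le> (\<Sum>i\<in>{n+1..N}. q^i)"
    unfolding PB_def using q by (intro one_minus_prod_one_minus_le_sum) (auto simp: power_le_one)
  then have "PA * (1 - PB) \<le> PA * (\<Sum>i\<in>{n+1..N}. q^i)"
    using PA_nonneg by (intro mult_left_mono) auto
  also have "\<dots> \<le> 2 * (1 - q) * (\<Sum>i\<in>{n+1..N}. q^i)"
    using PA_le q by (intro mult_right_mono sum_nonneg) auto
  also have "\<dots> = 2 * (q^(n+1) - q^Suc N)"
    using sum_gp_multiplied[of "n+1" N q] n by (cases "n = N") (auto simp: algebra_simps)
  also have "\<dots> \<le> 2 * q^(n+1)" using q by simp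
  finally show ?thesis using split by (simp add: PA_def A_def algebra_simps)
qed

lemma minus_ln_one_minus_bounds:
  fixes p :: real
  assumes "0 \<le> p" "p < 1"
  shows "p \<le> - ln (1 - p)" "- ln (1 - p) \<le> p / (1 - p)"
proof -
  show "p \<le> - ln (1 - p)"
    using ln_le_minus_one[of "1 - p"] assms by simp
  have "ln (1 / (1 - p)) \<le> 1 / (1 - p) - 1"
    using ln_le_minus_one[of "1 / (1 - p)"] assms by simp
  then show "- ln (1 - p) \<le> p / (1 - p)"
    using assms by (simp add: ln_div field_simps)
qed

lemma eq_SUP_real_iff:
  fixes \<omega> :: "'i \<Rightarrow> real"
  assumes "m \<in> I"
  shows "\<omega> m = (SUP i\<in>I. \<omega> i) \<longleftrightarrow>
    (\<forall>i\<in>I. \<omega> i \<le> \<omega> m) \<or> (\<not> bdd_above (\<omega> ` I) \<and> \<omega> m = Sup (UNIV :: real set))"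
proof (cases "bdd_above (\<omega> ` I)")
  case True
  then show ?thesis
    using assms cSUP_upper[OF _ True] by (auto intro: cSup_eq_maximum[symmetric])
next
  case False
  \<comment> \<open>the supremum of an unbounded set of reals is the junk value \<open>Sup UNIV\<close>\<close>
  then have "(SUP i\<in>I. \<omega> i) = Sup UNIV"
    unfolding Sup_real_def bdd_above_def by (metis UNIV_I gt_ex not_le)
  then show ?thesis
    using False assms by (auto intro!: bdd_aboveI2)
qed

lemma not_bdd_above_iff_nat:
  fixes f :: "'i \<Rightarrow> real"
  shows "\<not> bdd_above (f ` I) \<longleftrightarrow> (\<forall>B::nat. \<exists>i\<in>I. real B < f i)"
proof
  assume "\<not> bdd_above (f ` I)"
  then show "\<forall>B::nat. \<exists>i\<in>I. real B < f i"
    by (meson bdd_aboveI2 not_le)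
next
  assume unbounded: "\<forall>B::nat. \<exists>i\<in>I. real B < f i"
  show "\<not> bdd_above (f ` I)"
  proof
    assume "bdd_above (f ` I)"
    then obtain b where b: "\<And>i. i \<in> I \<Longrightarrow> f i \<le> b" by (auto simp: bdd_above_def)
    obtain B :: nat where "b \<le> real B" using real_arch_simple by blast
    with unbounded b show False by (meson le_less_trans not_le)
  qed
qed

section \<open>The probability that a given coordinate is maximal\<close>

lemma eq_Max_image_iff:
  fixes \<omega> :: "nat \<Rightarrow> 'a::linorder"
  assumes "k < n"
  shows "\<omega> k = Max (\<omega> ` {..<n}) \<longleftrightarrow> (\<forall>j\<in>{..<n}. \<omega> j \<le> \<omega> k)"
proof -
  have "{..<n} \<noteq> {}" using assms by auto
  then show ?thesis
    using assms by (subst eq_commute) (auto simp: Max_eq_iff)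
qed

lemma sets_PiM_max_at:
  fixes M :: "'i \<Rightarrow> 'a::{linorder_topology, second_countable_topology} measure"
  assumes J: "countable J" "k \<in> J" and sets_M: "\<And>j. j \<in> J \<Longrightarrow> sets (M j) = sets borel"
  shows "{\<omega>\<in>space (PiM J M). \<forall>j\<in>J. \<omega> j \<le> \<omega> k} \<in> sets (PiM J M)"
proof -
  have comp: "(\<lambda>\<omega>. \<omega> j) \<in> borel_measurable (PiM J M)" if "j \<in> J" for j
    using measurable_component_singleton[OF that, of M] sets_M[OF that]
    by (simp cong: measurable_cong_sets)
  show ?thesis
    using J comp by (intro sets.sets_Collect_countable_All' borel_measurable_le) auto
qed

lemma emeasure_PiM_max_at':
  fixes M :: "'i \<Rightarrow> 'a::{linorder_topology, second_countable_topology} measure"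
  assumes J: "finite J" "k \<in> J"
    and prob: "\<And>j. prob_space (M j)"
    and sets_M: "\<And>j. j \<in> J \<Longrightarrow> sets (M j) = sets borel"
  shows "emeasure (PiM J M) {\<omega>\<in>space (PiM J M). \<forall>j\<in>J. \<omega> j \<le> \<omega> k}
       = (\<integral>\<^sup>+y. (\<Prod>j\<in>J-{k}. emeasure (M j) {..y}) \<partial>M k)"
proof -
  interpret P: product_prob_space M J
    using prob by (intro product_prob_space.intro product_sigma_finite.intro
        product_prob_space_axioms.intro prob_space_imp_sigma_finite)
  define I where "I = J - {k}"
  have JI: "J = insert k I" and "k \<notin> I" "finite I"
    using J by (auto simp: I_def)
  define S where "S = {\<omega>\<in>space (PiM J M). \<forall>j\<in>J. \<omega> j \<le> \<omega> k}"
  have S: "S \<in> sets (PiM J M)"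
    unfolding S_def using J sets_M by (intro sets_PiM_max_at countable_finite) auto
  have fiber: "indicator S (x(k := y)) = (indicator (Pi\<^sub>E I (\<lambda>j. {..y})) x :: ennreal)"
    if "x \<in> space (PiM I M)" "y \<in> space (M k)" for x y
  proof -
    have "x(k := y) \<in> space (PiM J M)"
      using that \<open>k \<notin> I\<close> unfolding JI by (auto simp: space_PiM PiE_iff extensional_def)
    then show ?thesis
      using that \<open>k \<notin> I\<close> unfolding S_def JI by (auto simp: indicator_def space_PiM PiE_iff)
  qed
  have box: "Pi\<^sub>E I (\<lambda>j. {..y}) \<in> sets (PiM I M)" for y
    using sets_M \<open>finite I\<close> JI by (intro sets_PiM_I_finite) auto
  have "emeasure (PiM J M) S = (\<integral>\<^sup>+\<omega>. indicator S \<omega> \<partial>PiM (insert k I) M)"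
    using S JI by simp
  also have "\<dots> = (\<integral>\<^sup>+ y. (\<integral>\<^sup>+ x. indicator S (x(k := y)) \<partial>PiM I M) \<partial>M k)"
    using S JI by (intro P.product_nn_integral_insert_rev \<open>finite I\<close> \<open>k \<notin> I\<close>) simp
  also have "\<dots> = (\<integral>\<^sup>+ y. (\<integral>\<^sup>+ x. indicator (Pi\<^sub>E I (\<lambda>j. {..y})) x \<partial>PiM I M) \<partial>M k)"
    by (intro nn_integral_cong fiber)
  also have "\<dots> = (\<integral>\<^sup>+ y. (\<Prod>j\<in>I. emeasure (M j) {..y}) \<partial>M k)"
    using box sets_M JI by (simp add: P.emeasure_PiM \<open>finite I\<close>)
  finally show ?thesis
    unfolding S_def I_def .
qed

lemma emeasure_PiM_max_at:
  fixes M :: "'i \<Rightarrow> 'a::{linorder_topology, second_countable_topology} measure"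
  assumes J: "finite J" "k \<in> J"
    and prob: "\<And>j. j \<in> J \<Longrightarrow> prob_space (M j)"
    and sets_M: "\<And>j. j \<in> J \<Longrightarrow> sets (M j) = sets borel"
  shows "emeasure (PiM J M) {\<omega>\<in>space (PiM J M). \<forall>j\<in>J. \<omega> j \<le> \<omega> k}
       = (\<integral>\<^sup>+y. (\<Prod>j\<in>J-{k}. emeasure (M j) {..y}) \<partial>M k)"
proof -
  \<comment> \<open>the factors outside \<open>J\<close> are irrelevant and may be replaced by probability spaces\<close>
  define M' where "M' i = (if i \<in> J then M i else count_space {undefined})" for i
  have "PiM J M = PiM J M'"
    by (intro PiM_cong) (auto simp: M'_def)
  moreover have "prob_space (M' i)" for i
    using prob by (cases "i \<in> J") (auto intro!: prob_spaceI simp: M'_def)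
  then have "emeasure (PiM J M') {\<omega>\<in>space (PiM J M'). \<forall>j\<in>J. \<omega> j \<le> \<omega> k}
      = (\<integral>\<^sup>+y. (\<Prod>j\<in>J-{k}. emeasure (M' j) {..y}) \<partial>M' k)"
    using J sets_M by (intro emeasure_PiM_max_at') (auto simp: M'_def)
  ultimately show ?thesis
    using J by (simp add: M'_def)
qed

section \<open>Exponential distributions\<close>

definition exp_cdf :: "real \<Rightarrow> real \<Rightarrow> real" where
  "exp_cdf r y = 1 - exp (- r * max 0 y)"

lemma exp_cdf_measurable [measurable]: "exp_cdf r \<in> borel_measurable borel"
  unfolding exp_cdf_def by measurable

lemma exp_cdf_nonneg: "0 \<le> r \<Longrightarrow> 0 \<le> exp_cdf r y"
  unfolding exp_cdf_def by (auto simp: mult_nonneg_nonneg)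

lemma exp_cdf_le_1: "exp_cdf r y \<le> 1"
  unfolding exp_cdf_def by simp

lemma exp_cdf_mono: "0 \<le> r \<Longrightarrow> y \<le> z \<Longrightarrow> exp_cdf r y \<le> exp_cdf r z"
  unfolding exp_cdf_def by (auto intro!: mult_left_mono simp: max_def)

lemma exp_cdf_scale: "0 < a \<Longrightarrow> exp_cdf (a * r) y = exp_cdf r (a * y)"
  unfolding exp_cdf_def by (auto simp: max_def mult_le_0_iff zero_le_mult_iff mult_ac)

lemma exp_cdf_of_nat_rate: "0 \<le> x \<Longrightarrow> exp_cdf (real k) x = 1 - exp (- x) ^ k"
  unfolding exp_cdf_def by (simp add: exp_of_nat_mult[symmetric] mult_ac)

lemma emeasure_exponential_atMost:
  "0 < r \<Longrightarrow> emeasure (density lborel (exponential_density r)) {..y} = exp_cdf r y"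
  using emeasure_erlang_density[of r 0 y] by (simp add: erlang_CDF_0 exp_cdf_def max_def)

lemma emeasure_exponential_interval:
  assumes p: "0 < p" "p < 1"
  shows "emeasure (density lborel (exponential_density (- ln (1 - p)))) {real r<..real r + 1}
       = (1 - p) ^ r * p"
proof -
  let ?D = "density lborel (exponential_density (- ln (1 - p)))"
  interpret prob_space ?D
    using p by (intro prob_space_exponential_density) simp
  have cdf: "emeasure ?D {..real k} = 1 - (1 - p) ^ k" for k
  proof -
    have "exp (ln (1 - p) * real k) = (1 - p) ^ k"
      using p by (simp add: exp_of_nat_mult mult.commute)
    then show ?thesis
      using p emeasure_erlang_density[of "- ln (1 - p)" 0 "real k"] by (simp add: erlang_CDF_0)
  qed
  have "{real r<..real r + 1} = {..real (Suc r)} - {..real r}" by auto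
  then have "emeasure ?D {real r<..real r + 1} = emeasure ?D {..real (Suc r)} - emeasure ?D {..real r}"
    by (simp add: emeasure_Diff)
  also have "\<dots> = ennreal ((1 - (1 - p) ^ Suc r) - (1 - (1 - p) ^ r))"
    unfolding cdf using p by (intro ennreal_minus) (simp add: power_le_one)
  also have "(1 - (1 - p) ^ Suc r) - (1 - (1 - p) ^ r) = (1 - p) ^ r * p"
    by (simp add: algebra_simps)
  finally show ?thesis .
qed

definition prob_valued :: "(real \<Rightarrow> real) \<Rightarrow> bool" where
  "prob_valued h \<longleftrightarrow> h \<in> borel_measurable borel \<and> (\<forall>x. 0 \<le> h x \<and> h x \<le> 1)"

lemma prob_valued_one: "prob_valued (\<lambda>_. 1)"
  unfolding prob_valued_def by auto

lemma prob_valued_compl: "prob_valued h \<Longrightarrow> prob_valued (\<lambda>x. 1 - h x)"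
  unfolding prob_valued_def by auto

lemma prob_valued_scale: "prob_valued h \<Longrightarrow> prob_valued (\<lambda>x. h (a * x))"
  unfolding prob_valued_def by auto

lemma prob_valued_prod_exp_cdf: "(\<And>j. j \<in> J \<Longrightarrow> 0 \<le> r j) \<Longrightarrow> prob_valued (\<lambda>y. \<Prod>j\<in>J. exp_cdf (r j) y)"
  unfolding prob_valued_def by (auto intro!: prod_nonneg prod_le_1 exp_cdf_nonneg exp_cdf_le_1)

definition exp_expectation :: "real \<Rightarrow> (real \<Rightarrow> real) \<Rightarrow> real" where
  "exp_expectation c h = (\<integral>x. h x \<partial>density lborel (exponential_density c))"

context
  fixes c :: real and h :: "real \<Rightarrow> real"
  assumes c: "0 < c" and h: "prob_valued h"
begin

interpretation prob_space "density lborel (exponential_density c)"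
  using prob_space_exponential_density[OF c] .

lemma integrable_exponential_prob_valued: "integrable (density lborel (exponential_density c)) h"
  using h unfolding prob_valued_def by (intro integrable_const_bound[where B=1]) auto

lemma integrable_exponential_density_times:
  "integrable lborel (\<lambda>x. exponential_density c x * h x)"
  using integrable_exponential_prob_valued h c
  by (subst (asm) integrable_density) (auto simp: prob_valued_def exponential_density_nonneg)

lemma exp_expectation_lborel: "exp_expectation c h = (\<integral>x. exponential_density c x * h x \<partial>lborel)"
  unfolding exp_expectation_def using h c
  by (subst integral_density) (auto simp: prob_valued_def exponential_density_nonneg)

lemma exp_expectation_nn_integral_density:
  "ennreal (exp_expectation c h) = (\<integral>\<^sup>+x. ennreal (h x) \<partial>density lborel (exponential_density c))"
  unfolding exp_expectation_def using integrable_exponential_prob_valued h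
  by (intro nn_integral_eq_integral[symmetric]) (auto simp: prob_valued_def)

lemma exp_expectation_nn_integral:
  "ennreal (exp_expectation c h) = (\<integral>\<^sup>+x. ennreal (exponential_density c x * h x) \<partial>lborel)"
  unfolding exp_expectation_nn_integral_density using h
  by (subst nn_integral_density) (auto simp: prob_valued_def ennreal_mult exponential_density_nonneg[OF c])

lemma exp_expectation_compl: "exp_expectation c (\<lambda>x. 1 - h x) = 1 - exp_expectation c h"
  unfolding exp_expectation_def using integrable_exponential_prob_valued prob_space
  by (subst Bochner_Integration.integral_diff) auto

lemma exp_expectation_nonneg: "0 \<le> exp_expectation c h"
  unfolding exp_expectation_def using h by (auto intro!: integral_nonneg_AE simp: prob_valued_def)

end

lemma exp_expectation_const:
  assumes "0 < c" shows "exp_expectation c (\<lambda>_. a) = a"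
proof -
  interpret prob_space "density lborel (exponential_density c)"
    using prob_space_exponential_density[OF assms] .
  show ?thesis
    unfolding exp_expectation_def using prob_space by simp
qed

lemma exp_expectation_le_1: "0 < c \<Longrightarrow> prob_valued h \<Longrightarrow> exp_expectation c h \<le> 1"
  using exp_expectation_nonneg[of c "\<lambda>x. 1 - h x"] exp_expectation_compl[of c h]
  by (simp add: prob_valued_compl)

lemma exp_expectation_diff:
  "0 < c \<Longrightarrow> prob_valued h \<Longrightarrow> prob_valued g \<Longrightarrow>
    exp_expectation c (\<lambda>x. h x - g x) = exp_expectation c h - exp_expectation c g"
  unfolding exp_expectation_def
  using integrable_exponential_prob_valued[of c h] integrable_exponential_prob_valued[of c g]
  by (rule Bochner_Integration.integral_diff)

lemma exp_expectation_le_scaled: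
  assumes c: "0 < c" "0 < c'" and h: "prob_valued h" "prob_valued g"
    and le: "\<And>x. 0 \<le> x \<Longrightarrow> exponential_density c x * h x \<le> K * (exponential_density c' x * g x)"
  shows "exp_expectation c h \<le> K * exp_expectation c' g"
proof -
  have "(\<integral>x. exponential_density c x * h x \<partial>lborel) \<le> (\<integral>x. K * (exponential_density c' x * g x) \<partial>lborel)"
    using le integrable_exponential_density_times[OF c(1) h(1)] integrable_exponential_density_times[OF c(2) h(2)]
    by (intro integral_mono) (auto simp: exponential_density_def not_le)
  then show ?thesis
    using exp_expectation_lborel[OF c(1) h(1)] exp_expectation_lborel[OF c(2) h(2)] by simp
qed

lemma exp_expectation_mono:
  assumes "0 < c" "prob_valued h" "prob_valued g" "\<And>x. 0 \<le> x \<Longrightarrow> h x \<le> g x"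
  shows "exp_expectation c h \<le> exp_expectation c g"
  using exp_expectation_le_scaled[of c c h g 1] assms
  by (simp add: mult_left_mono exponential_density_nonneg)

lemma exp_expectation_le_rate_ratio:
  assumes m: "0 < m" "m \<le> c" and h: "prob_valued h"
  shows "exp_expectation c h \<le> (c / m) * exp_expectation m h"
proof (rule exp_expectation_le_scaled)
  fix x :: real assume "0 \<le> x"
  then have "c * exp (- x * c) \<le> (c / m) * (m * exp (- x * m))"
    using m by (auto intro!: mult_left_mono)
  then show "exponential_density c x * h x \<le> (c / m) * (exponential_density m x * h x)"
    using h m \<open>0 \<le> x\<close> by (auto simp: exponential_density_def prob_valued_def mult_ac intro!: mult_left_mono)
qed (use m h in auto)

lemma exp_expectation_diff_le:
  assumes m: "0 < m" and c: "0 < c" and h: "prob_valued h"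
  shows "exp_expectation c h - exp_expectation m h \<le> \<bar>c - m\<bar> / m"
proof (cases "m \<le> c")
  case True
  have "exp_expectation c h \<le> exp_expectation m h + (c / m - 1) * exp_expectation m h"
    using exp_expectation_le_rate_ratio[OF m True h] by (simp add: algebra_simps)
  also have "\<dots> \<le> exp_expectation m h + (c / m - 1)"
    using True m exp_expectation_le_1[OF m h] by (intro add_left_mono mult_left_le) auto
  finally show ?thesis
    using True m by (simp add: diff_divide_distrib)
next
  case False
  then have cm: "c \<le> m" by simp
  have "1 - exp_expectation m h \<le> (m / c) * (1 - exp_expectation c h)"
    using exp_expectation_le_rate_ratio[OF c cm prob_valued_compl[OF h]]
    by (simp add: exp_expectation_compl[OF c h] exp_expectation_compl[OF m h])
  then have "m * exp_expectation c h \<le> (m - c) + c * exp_expectation m h"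
    using c by (simp add: field_simps)
  also have "\<dots> \<le> (m - c) + m * exp_expectation m h"
    using False exp_expectation_nonneg[OF m h] by (intro add_left_mono mult_right_mono) auto
  finally show ?thesis
    using False m by (simp add: field_simps)
qed

lemma abs_exp_expectation_diff_le:
  assumes "0 < m" "0 < c" "prob_valued h"
  shows "\<bar>exp_expectation c h - exp_expectation m h\<bar> \<le> \<bar>c - m\<bar> / m"
  using exp_expectation_diff_le[OF assms] exp_expectation_diff_le[OF assms(1,2) prob_valued_compl[OF assms(3)]]
  by (simp add: exp_expectation_compl assms abs_le_iff)

lemma exp_expectation_scale:
  assumes a: "0 < a" and c: "0 < c" and h: "prob_valued h"
  shows "exp_expectation (a * c) (\<lambda>x. h (a * x)) = exp_expectation c h"
proof -
  have ac: "0 < a * c" using a c by simp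
  have [measurable]: "h \<in> borel_measurable borel" using h by (simp add: prob_valued_def)
  have "ennreal (exp_expectation c h) = (\<integral>\<^sup>+x. ennreal (exponential_density c x * h x) \<partial>lborel)"
    by (rule exp_expectation_nn_integral[OF c h])
  also have "\<dots> = ennreal a * (\<integral>\<^sup>+x. ennreal (exponential_density c (a * x) * h (a * x)) \<partial>lborel)"
    using nn_integral_real_affine[of "\<lambda>x. ennreal (exponential_density c x * h x)" a 0] a by simp
  also have "\<dots> = (\<integral>\<^sup>+x. ennreal (exponential_density (a * c) x * h (a * x)) \<partial>lborel)"
  proof (subst nn_integral_cmult[symmetric], simp, intro nn_integral_cong)
    fix x
    have "a * exponential_density c (a * x) = exponential_density (a * c) x"
      using a by (auto simp: exponential_density_def mult_less_0_iff mult_ac)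
    then show "ennreal a * ennreal (exponential_density c (a * x) * h (a * x))
      = ennreal (exponential_density (a * c) x * h (a * x))"
      using a c h by (subst ennreal_mult[symmetric])
        (auto simp: prob_valued_def exponential_density_nonneg mult.assoc[symmetric])
  qed
  also have "\<dots> = ennreal (exp_expectation (a * c) (\<lambda>x. h (a * x)))"
    by (rule exp_expectation_nn_integral[OF ac prob_valued_scale[OF h], symmetric])
  finally show ?thesis
    using exp_expectation_nonneg[OF c h] exp_expectation_nonneg[OF ac prob_valued_scale[OF h]] by simp
qed

lemma exp_expectation_le_of_exp_decay:
  assumes m: "0 < m" and a: "0 \<le> a" and h: "prob_valued h"
    and le: "\<And>x. 0 \<le> x \<Longrightarrow> h x \<le> K * exp (- a * x)"
  shows "exp_expectation m h \<le> K * m / (m + a)"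
proof -
  have ma: "0 < m + a" using m a by simp
  have "exp_expectation m h \<le> (K * m / (m + a)) * exp_expectation (m + a) (\<lambda>_. 1)"
  proof (rule exp_expectation_le_scaled[OF m ma h prob_valued_one])
    fix x :: real assume x: "0 \<le> x"
    have "m * exp (- x * m) * h x \<le> m * exp (- x * m) * (K * exp (- a * x))"
      using le[OF x] m by (intro mult_left_mono) auto
    also have "\<dots> = K * m * exp (- x * (m + a))"
      by (simp add: exp_add[symmetric] algebra_simps)
    also have "\<dots> = (K * m / (m + a)) * ((m + a) * exp (- x * (m + a)))"
      using ma by simp
    finally show "exponential_density m x * h x \<le> (K * m / (m + a)) * (exponential_density (m + a) x * 1)"
      using x by (simp add: exponential_density_def)
  qed
  then show ?thesis using exp_expectation_const[OF ma] by simp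
qed

lemma exp_expectation_eq_suminf_intervals:
  assumes c: "0 < c" and h: "prob_valued h"
  shows "ennreal (exp_expectation c h)
       = (\<Sum>r. \<integral>\<^sup>+x. ennreal (exponential_density c x * h x) * indicator {real r<..real r + 1} x \<partial>lborel)"
proof -
  have [measurable]: "h \<in> borel_measurable borel" using h by (simp add: prob_valued_def)
  have disj: "disjoint_family (\<lambda>r::nat. {real r<..real r + 1})"
    unfolding disjoint_family_on_def
  proof (intro ballI impI)
    fix i j :: nat assume "i \<noteq> j"
    then show "{real i<..real i + 1} \<inter> {real j<..real j + 1} = {}"
      by (cases "i < j") (auto simp: less_iff_Suc_add)
  qed
  have "(\<Union>r::nat. {real r<..real r + 1}) = {0<..}"
  proof (intro set_eqI iffI)
    fix x :: real assume "x \<in> {0<..}"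
    then have "0 < x" by simp
    then have "real (nat (\<lceil>x\<rceil> - 1)) < x" "x \<le> real (nat (\<lceil>x\<rceil> - 1)) + 1"
      by linarith+
    then show "x \<in> (\<Union>r::nat. {real r<..real r + 1})" by auto
  qed auto
  then have split: "indicator {0<..} x = (\<Sum>r. indicator {real r<..real r + 1} x :: ennreal)" for x :: real
    by (simp add: suminf_indicator[OF disj])
  have "ennreal (exp_expectation c h) = (\<integral>\<^sup>+x. ennreal (exponential_density c x * h x) \<partial>lborel)"
    by (rule exp_expectation_nn_integral[OF c h])
  also have "\<dots> = (\<integral>\<^sup>+x. ennreal (exponential_density c x * h x) * indicator {0<..} x \<partial>lborel)"
    by (intro nn_integral_cong_AE, rule eventually_mono[OF AE_lborel_singleton[of 0]])
      (auto simp: exponential_density_def indicator_def)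
  also have "\<dots> = (\<Sum>r. \<integral>\<^sup>+x. ennreal (exponential_density c x * h x) * indicator {real r<..real r + 1} x \<partial>lborel)"
    unfolding split by (simp add: nn_integral_suminf[symmetric])
  finally show ?thesis .
qed

context
  fixes p :: real and h :: "real \<Rightarrow> real"
  assumes p: "0 < p" "p < 1" and h: "prob_valued h" and h_mono: "mono h"
begin

private lemma rate_pos: "0 < - ln (1 - p)"
  using p by simp

private lemma h_unit: "0 \<le> h x" "h x \<le> 1"
  using h by (auto simp: prob_valued_def)

private lemma interval_mass:
  "(\<integral>\<^sup>+x. ennreal (exponential_density (- ln (1 - p)) x) * indicator {real r<..real r + 1} x \<partial>lborel)
   = ennreal ((1 - p) ^ r * p)"
  using emeasure_exponential_interval[OF p, of r] by (subst (asm) emeasure_density) auto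

private lemma interval_piece_bounds:
  fixes r :: nat
  defines "piece \<equiv> (\<integral>\<^sup>+x. ennreal (exponential_density (- ln (1 - p)) x * h x)
                             * indicator {real r<..real r + 1} x \<partial>lborel)"
  shows "ennreal ((1 - p) ^ r * p * h (real r)) \<le> piece"
    and "piece \<le> ennreal ((1 - p) ^ r * p * h (real (Suc r)))"
proof -
  let ?f = "\<lambda>x. ennreal (exponential_density (- ln (1 - p)) x) * indicator {real r<..real r + 1} x"
  have "ennreal (h (real r)) * ?f x
      \<le> ennreal (exponential_density (- ln (1 - p)) x * h x) * indicator {real r<..real r + 1} x" for x
    using mono_onD[OF h_mono, of "real r" x] exponential_density_nonneg[OF rate_pos] h_unit
    by (auto simp: indicator_def ennreal_mult'[symmetric] mult.commute intro!: ennreal_leI mult_right_mono)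
  then have "(\<integral>\<^sup>+x. ennreal (h (real r)) * ?f x \<partial>lborel) \<le> piece"
    unfolding piece_def by (intro nn_integral_mono) auto
  then show "ennreal ((1 - p) ^ r * p * h (real r)) \<le> piece"
    using p h_unit by (simp add: nn_integral_cmult interval_mass ennreal_mult'[symmetric] mult_ac)
  have "ennreal (exponential_density (- ln (1 - p)) x * h x) * indicator {real r<..real r + 1} x
      \<le> ennreal (h (real (Suc r))) * ?f x" for x
    using mono_onD[OF h_mono, of x "real (Suc r)"] exponential_density_nonneg[OF rate_pos] h_unit
    by (auto simp: indicator_def ennreal_mult'[symmetric] mult.commute intro!: ennreal_leI mult_right_mono)
  then have "piece \<le> (\<integral>\<^sup>+x. ennreal (h (real (Suc r))) * ?f x \<partial>lborel)"
    unfolding piece_def by (intro nn_integral_mono) auto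
  then show "piece \<le> ennreal ((1 - p) ^ r * p * h (real (Suc r)))"
    using p h_unit by (simp add: nn_integral_cmult interval_mass ennreal_mult'[symmetric] mult_ac)
qed

lemma exp_expectation_le_geometric_sum:
  "ennreal (exp_expectation (- ln (1 - p)) h) \<le> (\<Sum>r. ennreal ((1 - p) ^ r * p * h (real (Suc r))))"
  unfolding exp_expectation_eq_suminf_intervals[OF rate_pos h]
  by (intro suminf_le interval_piece_bounds(2)) auto

lemma geometric_sum_le_exp_expectation:
  "ennreal (1 - p) * (\<Sum>r. ennreal ((1 - p) ^ r * p * h (real (Suc r))))
   \<le> ennreal (exp_expectation (- ln (1 - p)) h)"
proof -
  let ?piece = "\<lambda>r::nat. \<integral>\<^sup>+x. ennreal (exponential_density (- ln (1 - p)) x * h x)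
                             * indicator {real r<..real r + 1} x \<partial>lborel"
  have "ennreal (1 - p) * (\<Sum>r. ennreal ((1 - p) ^ r * p * h (real (Suc r))))
      = (\<Sum>r. ennreal ((1 - p) ^ Suc r * p * h (real (Suc r))))"
    using p h_unit by (simp add: ennreal_suminf_cmult[symmetric] ennreal_mult'[symmetric] mult_ac)
  also have "\<dots> \<le> (\<Sum>r. ?piece (Suc r))"
    by (intro suminf_le interval_piece_bounds(1)) auto
  also have "\<dots> \<le> (\<Sum>r. ?piece r)"
    using suminf_offset[of ?piece 1] by (simp add: add_increasing2)
  finally show ?thesis
    unfolding exp_expectation_eq_suminf_intervals[OF rate_pos h] .
qed

end

lemma emeasure_PiM_exponential_max_at:
  assumes J: "finite J" "k \<in> J" and r: "\<And>j. j \<in> J \<Longrightarrow> 0 < r j"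
  shows "emeasure (PiM J (\<lambda>j. density lborel (exponential_density (r j))))
           {\<omega>\<in>space (PiM J (\<lambda>j. density lborel (exponential_density (r j)))). \<forall>j\<in>J. \<omega> j \<le> \<omega> k}
         = exp_expectation (r k) (\<lambda>y. \<Prod>j\<in>J-{k}. exp_cdf (r j) y)"
proof -
  let ?E = "\<lambda>j. density lborel (exponential_density (r j))"
  have cdfs: "(\<Prod>j\<in>J-{k}. emeasure (?E j) {..y}) = ennreal (\<Prod>j\<in>J-{k}. exp_cdf (r j) y)" for y
  proof -
    have "(\<Prod>j\<in>J-{k}. emeasure (?E j) {..y}) = (\<Prod>j\<in>J-{k}. ennreal (exp_cdf (r j) y))"
      using r by (intro prod.cong refl emeasure_exponential_atMost) auto
    also have "\<dots> = ennreal (\<Prod>j\<in>J-{k}. exp_cdf (r j) y)"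
      using r by (intro prod_ennreal exp_cdf_nonneg less_imp_le) auto
    finally show ?thesis .
  qed
  have "emeasure (PiM J ?E) {\<omega>\<in>space (PiM J ?E). \<forall>j\<in>J. \<omega> j \<le> \<omega> k}
      = (\<integral>\<^sup>+y. (\<Prod>j\<in>J-{k}. emeasure (?E j) {..y}) \<partial>?E k)"
    using J r by (intro emeasure_PiM_max_at) (auto intro: prob_space_exponential_density)
  also have "\<dots> = (\<integral>\<^sup>+y. ennreal (\<Prod>j\<in>J-{k}. exp_cdf (r j) y) \<partial>?E k)"
    by (simp only: cdfs)
  also have "\<dots> = exp_expectation (r k) (\<lambda>y. \<Prod>j\<in>J-{k}. exp_cdf (r j) y)"
    using J r prob_valued_prod_exp_cdf[of "J-{k}" r]
    by (intro exp_expectation_nn_integral_density[symmetric]) (auto simp: less_imp_le)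
  finally show ?thesis .
qed

section \<open>Truncations of the limit law\<close>

definition cdf_others :: "nat \<Rightarrow> nat \<Rightarrow> real \<Rightarrow> real" where
  "cdf_others m N x = (\<Prod>i\<in>{1..N}-{m}. exp_cdf (real i) x)"

text \<open>\<open>pX_upto m N = P(X\<^sub>m \<ge> X\<^sub>i for 1 \<le> i \<le> N)\<close> (\<open>emeasure_X_space_max_upto\<close>) decreases to \<open>pX m\<close>.\<close>

definition pX_upto :: "nat \<Rightarrow> nat \<Rightarrow> real" where
  "pX_upto m N = exp_expectation (real m) (cdf_others m N)"

lemma prob_valued_cdf_others: "prob_valued (cdf_others m N)"
  unfolding cdf_others_def by (intro prob_valued_prod_exp_cdf) auto

lemma cdf_others_mono: "x \<le> y \<Longrightarrow> cdf_others m N x \<le> cdf_others m N y"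
  unfolding cdf_others_def by (intro prod_mono) (auto intro!: exp_cdf_nonneg exp_cdf_mono)

lemma mono_cdf_others_scaled: "0 \<le> a \<Longrightarrow> mono (\<lambda>x. cdf_others m N (x / a))"
  by (intro monoI cdf_others_mono divide_right_mono)

lemma cdf_others_antimono: "N \<le> N' \<Longrightarrow> cdf_others m N' x \<le> cdf_others m N x"
  unfolding cdf_others_def by (rule prod_superset_le) (auto intro!: exp_cdf_nonneg exp_cdf_le_1)

lemma pX_upto_antimono: "1 \<le> m \<Longrightarrow> N \<le> N' \<Longrightarrow> pX_upto m N' \<le> pX_upto m N"
  unfolding pX_upto_def by (intro exp_expectation_mono prob_valued_cdf_others cdf_others_antimono) auto

lemma cdf_others_diff_le:
  assumes "1 \<le> m" "m \<le> n" "2 \<le> n" "n \<le> N" and x: "0 \<le> x"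
  shows "cdf_others m n x - cdf_others m N x \<le> 2 * exp (- (real n + 1) * x)"
proof -
  have "cdf_others m n x - cdf_others m N x
      = (\<Prod>i\<in>{1..n}-{m}. 1 - exp (- x)^i) - (\<Prod>i\<in>{1..N}-{m}. 1 - exp (- x)^i)"
    unfolding cdf_others_def using x by (simp add: exp_cdf_of_nat_rate)
  also have "\<dots> \<le> 2 * exp (- x) ^ (n+1)"
    using assms by (intro prod_one_minus_power_diff_le) auto
  also have "exp (- x) ^ (n+1) = exp (- (real n + 1) * x)"
    by (subst exp_of_nat_mult[symmetric]) (simp add: algebra_simps)
  finally show ?thesis .
qed

lemma pX_upto_diff_le:
  assumes m: "1 \<le> m" "m \<le> n" and n: "2 \<le> n" "n \<le> N"
  shows "pX_upto m n - pX_upto m N \<le> 2 * real m / (real m + (real n + 1))"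
proof -
  have diff: "prob_valued (\<lambda>x. cdf_others m n x - cdf_others m N x)"
    using prob_valued_cdf_others[of m n] prob_valued_cdf_others[of m N] cdf_others_antimono[OF n(2), of m]
    unfolding prob_valued_def by (auto intro: add_increasing2 simp: diff_le_eq)
  have "pX_upto m n - pX_upto m N = exp_expectation m (\<lambda>x. cdf_others m n x - cdf_others m N x)"
    unfolding pX_upto_def using m by (intro exp_expectation_diff[symmetric] prob_valued_cdf_others) auto
  also have "\<dots> \<le> 2 * real m / (real m + (real n + 1))"
    using m n cdf_others_diff_le by (intro exp_expectation_le_of_exp_decay[OF _ _ diff]) auto
  finally show ?thesis .
qed

text \<open>Coordinate \<open>0\<close> does not occur in \<open>X_space\<close>; clamping its rate to \<open>1\<close> makes every factor
  a probability space, as the locale \<open>product_prob_space\<close> requires.\<close>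

definition X_factor :: "nat \<Rightarrow> real measure" where
  "X_factor i = density lborel (exponential_density (real (max 1 i)))"

lemma prob_space_X_factor: "prob_space (X_factor i)"
  by (simp add: X_factor_def prob_space_exponential_density)

interpretation X: product_prob_space X_factor "{1..}"
  using prob_space_X_factor
  by (intro product_prob_space.intro product_sigma_finite.intro product_prob_space_axioms.intro
      prob_space_imp_sigma_finite)

lemma X_space_eq_PiM: "X_space = PiM {1..} X_factor"
  unfolding X_space_def X_factor_def by (intro PiM_cong) (auto simp: max_def)

interpretation X_space: prob_space X_space
  unfolding X_space_eq_PiM by (rule X.prob_space_axioms)

lemma sets_X_factor: "sets (X_factor i) = sets borel"
  by (simp add: X_factor_def)

lemma X_space_component_measurable: "1 \<le> i \<Longrightarrow> (\<lambda>\<omega>. \<omega> i) \<in> borel_measurable X_space"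
  using measurable_component_singleton[of i "{1..}" X_factor]
  unfolding X_space_eq_PiM by (simp add: sets_X_factor cong: measurable_cong_sets)

lemma emeasure_X_space_max_upto:
  assumes m: "1 \<le> m" "m \<le> N"
  shows "emeasure X_space {\<omega>\<in>space X_space. \<forall>i\<in>{1..N}. \<omega> i \<le> \<omega> m} = pX_upto m N"
proof -
  define S where "S = {\<omega>\<in>space (PiM {1..N} X_factor). \<forall>i\<in>{1..N}. \<omega> i \<le> \<omega> m}"
  have S: "S \<in> sets (PiM {1..N} X_factor)"
    unfolding S_def using m by (intro sets_PiM_max_at) (auto simp: sets_X_factor)
  have "{\<omega>\<in>space X_space. \<forall>i\<in>{1..N}. \<omega> i \<le> \<omega> m} = prod_emb {1..} X_factor {1..N} S"
    using m unfolding X_space_eq_PiM S_def prod_emb_def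
    by (auto simp: space_PiM PiE_iff extensional_def)
  then have "emeasure X_space {\<omega>\<in>space X_space. \<forall>i\<in>{1..N}. \<omega> i \<le> \<omega> m}
      = emeasure (PiM {1..} X_factor) (prod_emb {1..} X_factor {1..N} S)"
    by (simp only: X_space_eq_PiM)
  also have "\<dots> = emeasure (PiM {1..N} X_factor) S"
    using S by (intro X.emeasure_PiM_emb') auto
  also have "PiM {1..N} X_factor = PiM {1..N} (\<lambda>i. density lborel (exponential_density (real i)))"
    by (intro PiM_cong) (auto simp: X_factor_def max_def)
  also have "emeasure \<dots> S = exp_expectation (real m) (cdf_others m N)"
    unfolding S_def \<open>PiM {1..N} X_factor = _\<close> cdf_others_def
    using m by (intro emeasure_PiM_exponential_max_at) auto
  finally show ?thesis
    by (simp add: pX_upto_def)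
qed

lemma X_space_component_eq_null:
  assumes m: "1 \<le> m"
  shows "{\<omega>\<in>space X_space. \<omega> m = c} \<in> null_sets X_space"
proof -
  have "emeasure X_space {\<omega>\<in>space X_space. \<omega> m \<in> {c}} = emeasure (X_factor m) {c}"
    unfolding X_space_eq_PiM using m by (intro X.emeasure_PiM_Collect_single) (auto simp: sets_X_factor)
  also have "\<dots> = 0"
  proof (rule null_setsD1)
    have "AE x in lborel. x \<in> {c} \<longrightarrow> ennreal (exponential_density (real (max 1 m)) x) = 0"
      using AE_lborel_singleton[of c] by (rule eventually_mono) simp
    then show "{c} \<in> null_sets (X_factor m)"
      unfolding X_factor_def by (subst null_sets_density_iff) auto
  qed
  finally show ?thesis
    using X_space_component_measurable[OF m] by (auto simp: null_sets_def)
qed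

lemma pX_eq_measure_max:
  assumes m: "1 \<le> m"
  shows "pX m = measure X_space {\<omega>\<in>space X_space. \<forall>i\<in>{1..}. \<omega> i \<le> \<omega> m}"
proof -
  define A where "A = {\<omega>\<in>space X_space. \<forall>i\<in>{1..}. \<omega> i \<le> \<omega> m}"
  define U where "U = {\<omega>\<in>space X_space. \<not> bdd_above (\<omega> ` {1..})}"
  define Z where "Z = {\<omega>\<in>space X_space. \<omega> m = Sup (UNIV :: real set)}"
  have A: "A \<in> sets X_space"
    unfolding A_def X_space_eq_PiM using m by (intro sets_PiM_max_at) (auto simp: sets_X_factor)
  have U: "U \<in> sets X_space"
    unfolding U_def not_bdd_above_iff_nat
    by (intro sets.sets_Collect_countable_All sets.sets_Collect_countable_Ex' borel_measurable_less
        X_space_component_measurable) auto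
  have Z: "Z \<in> null_sets X_space"
    unfolding Z_def using m by (rule X_space_component_eq_null)
  have "{\<omega>\<in>space X_space. \<omega> m = (SUP i\<in>{1..}. \<omega> i)} = A \<union> (U \<inter> Z)"
    using eq_SUP_real_iff[of m "{1..}"] m by (auto simp: A_def U_def Z_def)
  then have "pX m = measure X_space (A \<union> (U \<inter> Z))"
    by (simp add: pX_def)
  also have "\<dots> = measure X_space A"
    using A U Z by (intro measure_Un_null_set null_sets_subset[OF Z]) auto
  finally show ?thesis unfolding A_def .
qed

lemma pX_upto_tendsto_pX:
  assumes m: "1 \<le> m"
  shows "pX_upto m \<longlonglongrightarrow> pX m"
proof -
  define A where "A N = {\<omega>\<in>space X_space. \<forall>i\<in>{1..N+m}. \<omega> i \<le> \<omega> m}" for N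
  have "A N \<in> sets X_space" for N
    unfolding A_def using m
    by (intro sets.sets_Collect_finite_All borel_measurable_le X_space_component_measurable) auto
  moreover have "decseq A"
    unfolding decseq_def A_def by auto
  ultimately have "(\<lambda>N. measure X_space (A N)) \<longlonglongrightarrow> measure X_space (\<Inter>N. A N)"
    by (intro Lim_measure_decseq) (auto simp: X_space.emeasure_finite)
  moreover have "measure X_space (A N) = pX_upto m (N + m)" for N
    using emeasure_X_space_max_upto[of m "N + m"] m
    by (simp add: A_def X_space.emeasure_eq_measure pX_upto_def exp_expectation_nonneg
        prob_valued_cdf_others)
  moreover have "(\<Inter>N. A N) = {\<omega>\<in>space X_space. \<forall>i\<in>{1..}. \<omega> i \<le> \<omega> m}"
  proof (intro set_eqI iffI)
    fix \<omega> assume "\<omega> \<in> (\<Inter>N. A N)"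
    then have "\<omega> i \<le> \<omega> m" if "1 \<le> i" for i
      using that by (auto simp: A_def dest!: spec[of _ i])
    then show "\<omega> \<in> {\<omega>\<in>space X_space. \<forall>i\<in>{1..}. \<omega> i \<le> \<omega> m}"
      using \<open>\<omega> \<in> (\<Inter>N. A N)\<close> by (auto simp: A_def)
  qed (auto simp: A_def)
  ultimately show ?thesis
    using pX_eq_measure_max[OF m] by (simp add: LIMSEQ_offset[where k=m])
qed

lemma pX_le_pX_upto: "1 \<le> m \<Longrightarrow> pX m \<le> pX_upto m N"
  using decseq_ge[OF _ pX_upto_tendsto_pX] pX_upto_antimono by (auto simp: decseq_def)

lemma pX_upto_minus_pX_le:
  assumes m: "1 \<le> m" "m \<le> n" and n: "2 \<le> n"
  shows "pX_upto m n - pX m \<le> 2 * real m / (real m + (real n + 1))"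
proof (rule LIMSEQ_le_const2)
  show "(\<lambda>N. pX_upto m n - pX_upto m N) \<longlonglongrightarrow> pX_upto m n - pX m"
    using pX_upto_tendsto_pX[OF m(1)] by (intro tendsto_intros)
  show "\<exists>N0. \<forall>N\<ge>N0. pX_upto m n - pX_upto m N \<le> 2 * real m / (real m + (real n + 1))"
    using pX_upto_diff_le[OF m n] by blast
qed

section \<open>The exponential model\<close>

lemma pW_eq_pX_upto:
  assumes m: "1 \<le> m" "m \<le> n"
  shows "pW n m = pX_upto m n"
proof -
  define r where "r j = real (n - j) / real n" for j
  have n: "0 < real n" using m by simp
  interpret W: prob_space "W_space n"
    unfolding W_space_def by (intro prob_space_PiM prob_space_exponential_density) auto
  have "ennreal (pW n m)
      = emeasure (W_space n) {\<omega>\<in>space (W_space n). \<forall>j\<in>{..<n}. \<omega> j \<le> \<omega> (n - m)}"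
  proof -
    have "n - m < n" using m by simp
    then show ?thesis
      unfolding pW_def W.emeasure_eq_measure by (simp only: eq_Max_image_iff)
  qed
  also have "\<dots> = exp_expectation (r (n - m)) (\<lambda>y. \<Prod>j\<in>{..<n}-{n - m}. exp_cdf (r j) y)"
    unfolding W_space_def r_def using m by (intro emeasure_PiM_exponential_max_at) auto
  also have "(\<lambda>y. \<Prod>j\<in>{..<n}-{n - m}. exp_cdf (r j) y) = (\<lambda>y. cdf_others m n (y / real n))"
  proof
    fix y
    have "(\<Prod>j\<in>{..<n}-{n - m}. exp_cdf (r j) y) = (\<Prod>i\<in>{1..n}-{m}. exp_cdf (real i / real n) y)"
      unfolding r_def using m
      by (intro prod.reindex_bij_witness[where i="\<lambda>i. n - i" and j="\<lambda>j. n - j"]) auto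
    also have "\<dots> = cdf_others m n (y / real n)"
      unfolding cdf_others_def using exp_cdf_scale[of "1 / real n"] n by (simp add: mult.commute)
    finally show "(\<Prod>j\<in>{..<n}-{n - m}. exp_cdf (r j) y) = cdf_others m n (y / real n)" .
  qed
  also have "exp_expectation (r (n - m)) (\<lambda>y. cdf_others m n (y / real n)) = pX_upto m n"
    unfolding pX_upto_def r_def
    using exp_expectation_scale[of "1 / real n" "real m" "cdf_others m n"] m n prob_valued_cdf_others
    by (simp add: mult.commute)
  finally show ?thesis
    using exp_expectation_nonneg[OF _ prob_valued_cdf_others, of m m n] measure_nonneg m
    by (simp add: pX_upto_def pW_def)
qed

lemma pW_minus_pX_bigo:
  assumes m: "1 \<le> m"
  shows "(\<lambda>n. pW n m - pX m) \<in> O(\<lambda>n. 1 / real n)"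
proof (rule bigoI[where c = "2 * real m"], unfold eventually_at_top_linorder, intro exI allI impI)
  fix n assume "max m 2 \<le> n"
  then have n: "m \<le> n" "2 \<le> n" by auto
  have "0 \<le> pW n m - pX m" "pW n m - pX m \<le> 2 * real m / (real m + (real n + 1))"
    using pW_eq_pX_upto[OF m n(1)] pX_le_pX_upto[OF m] pX_upto_minus_pX_le[OF m n] by auto
  moreover have "2 * real m / (real m + (real n + 1)) \<le> 2 * real m / real n"
    using n m by (intro divide_left_mono) auto
  ultimately show "norm (pW n m - pX m) \<le> 2 * real m * norm (1 / real n)"
    by simp
qed

section \<open>The geometric model\<close>

lemma emeasure_shifted_geometric_atMost:
  assumes "0 < p" "p \<le> 1"
  shows "emeasure (measure_pmf (map_pmf Suc (geometric_pmf p))) {..y} = 1 - (1 - p) ^ y"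
proof -
  have "Suc -` {..y} = {..<y}" by auto
  then have "measure (measure_pmf (map_pmf Suc (geometric_pmf p))) {..y} = (\<Sum>r<y. (1 - p)^r * p)"
    using assms by (simp add: measure_measure_pmf_finite)
  also have "\<dots> = 1 - (1 - p) ^ y"
    using one_diff_power_eq[of "1 - p" y] by (simp add: sum_distrib_left sum_distrib_right mult.commute)
  finally show ?thesis
    by (simp add: measure_pmf.emeasure_eq_measure)
qed

lemma nn_integral_shifted_geometric:
  assumes "0 < p" "p \<le> 1"
  shows "(\<integral>\<^sup>+y. f y \<partial>measure_pmf (map_pmf Suc (geometric_pmf p)))
       = (\<Sum>r. ennreal ((1 - p)^r * p) * f (Suc r))"
  unfolding nn_integral_map_pmf using assms
  by (simp add: nn_integral_measure_pmf nn_integral_count_space_nat)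

text \<open>The factor for \<open>i\<close> is \<open>P(D\<^bsub>n-i\<^esub> \<le> y)\<close>, the success probability of \<open>D\<^bsub>n-i\<^esub>\<close> being \<open>i/n\<close>.\<close>

definition geom_cdf_others :: "nat \<Rightarrow> nat \<Rightarrow> nat \<Rightarrow> real" where
  "geom_cdf_others n m y = (\<Prod>i\<in>{1..n}-{m}. 1 - (1 - real i / real n) ^ y)"

lemma geom_cdf_others_nonneg: "0 \<le> geom_cdf_others n m y"
  unfolding geom_cdf_others_def by (intro prod_nonneg) (auto intro!: power_le_one)

lemma cdf_others_le_geom_cdf_others: "cdf_others m n (real y / real n) \<le> geom_cdf_others n m y"
  unfolding cdf_others_def geom_cdf_others_def
proof (rule prod_mono)
  fix i assume i: "i \<in> {1..n}-{m}"
  define q where "q = real i / real n"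
  have q: "0 \<le> 1 - q" using i by (simp add: q_def)
  have "exp_cdf (real i) (real y / real n) = 1 - exp (- q) ^ y"
    unfolding exp_cdf_def q_def by (simp add: exp_of_nat_mult[symmetric] mult_ac)
  also have "\<dots> \<le> 1 - (1 - q) ^ y"
    using q exp_ge_add_one_self[of "- q"] by (simp add: power_mono)
  finally show "0 \<le> exp_cdf (real i) (real y / real n) \<and> exp_cdf (real i) (real y / real n) \<le> 1 - (1 - real i / real n) ^ y"
    by (simp add: q_def exp_cdf_nonneg)
qed

lemma geom_cdf_others_le_cdf_others:
  assumes "m \<le> K" "K < n"
  shows "geom_cdf_others n m y \<le> cdf_others m K (real y / real (n - K))"
proof -
  have "geom_cdf_others n m y \<le> (\<Prod>i\<in>{1..K}-{m}. 1 - (1 - real i / real n) ^ y)"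
    unfolding geom_cdf_others_def using assms by (intro prod_superset_le) (auto intro!: power_le_one)
  also have "\<dots> \<le> cdf_others m K (real y / real (n - K))"
    unfolding cdf_others_def
  proof (rule prod_mono)
    fix i assume i: "i \<in> {1..K}-{m}"
    have "- real i / real (n - K) \<le> - real i / (real n - real i)"
      using i assms by (simp add: of_nat_diff frac_le)
    also have "\<dots> = - (real i / real n) / (1 - real i / real n)"
      using i assms by (simp add: field_simps)
    also have "\<dots> \<le> ln (1 - real i / real n)"
      using minus_ln_one_minus_bounds(2)[of "real i / real n"] i assms by simp
    finally have "exp (- real i / real (n - K)) \<le> exp (ln (1 - real i / real n))"
      by (simp only: exp_le_cancel_iff)
    also have "\<dots> = 1 - real i / real n"
      using i assms by simp
    finally have "exp (- real i / real (n - K)) \<le> 1 - real i / real n" .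
    then have "exp (- real i / real (n - K)) ^ y \<le> (1 - real i / real n) ^ y"
      by (intro power_mono) auto
    moreover have "exp_cdf (real i) (real y / real (n - K)) = 1 - exp (- real i / real (n - K)) ^ y"
      unfolding exp_cdf_def by (simp add: exp_of_nat_mult[symmetric] mult_ac)
    ultimately show "0 \<le> 1 - (1 - real i / real n) ^ y
        \<and> 1 - (1 - real i / real n) ^ y \<le> exp_cdf (real i) (real y / real (n - K))"
      using i assms by (auto intro!: power_le_one)
  qed
  finally show ?thesis .
qed

lemma pD_nonneg: "0 \<le> pD n m"
  unfolding pD_def by (rule measure_nonneg)

lemma pD_le_1: "pD n m \<le> 1"
proof -
  interpret prob_space "D_space n"
    unfolding D_space_def by (intro prob_space_PiM prob_space_measure_pmf)
  show ?thesis unfolding pD_def by (rule prob_le_1)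
qed

lemma pD_eq_suminf:
  assumes m: "1 \<le> m" "m \<le> n"
  defines "p \<equiv> real m / real n"
  shows "ennreal (pD n m) = (\<Sum>r. ennreal ((1 - p)^r * p * geom_cdf_others n m (Suc r)))"
proof -
  define M where "M j = measure_pmf (map_pmf Suc (geometric_pmf (real (n - j) / real n)))" for j
  have D: "D_space n = PiM {..<n} M" unfolding D_space_def M_def ..
  have prob_M: "prob_space (M j)" for j
    unfolding M_def by (rule prob_space_measure_pmf)
  interpret D: prob_space "D_space n"
    unfolding D using prob_M by (rule prob_space_PiM)
  have sets_M: "sets (M j) = sets borel" for j
    by (simp add: M_def sets_borel_eq_count_space)
  have "ennreal (pD n m) = emeasure (D_space n) {\<omega>\<in>space (D_space n). \<forall>j\<in>{..<n}. \<omega> j \<le> \<omega> (n - m)}"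
  proof -
    have "n - m < n" using m by simp
    then show ?thesis
      unfolding pD_def D.emeasure_eq_measure by (simp only: eq_Max_image_iff)
  qed
  also have "\<dots> = (\<integral>\<^sup>+y. (\<Prod>j\<in>{..<n}-{n - m}. emeasure (M j) {..y}) \<partial>M (n - m))"
    unfolding D using m sets_M prob_M by (intro emeasure_PiM_max_at) auto
  also have "\<dots> = (\<integral>\<^sup>+y. ennreal (geom_cdf_others n m y) \<partial>M (n - m))"
  proof (intro nn_integral_cong)
    fix y
    have "(\<Prod>j\<in>{..<n}-{n - m}. emeasure (M j) {..y})
        = (\<Prod>j\<in>{..<n}-{n - m}. ennreal (1 - (1 - real (n - j) / real n) ^ y))"
      unfolding M_def by (intro prod.cong refl emeasure_shifted_geometric_atMost) auto
    also have "\<dots> = ennreal (\<Prod>j\<in>{..<n}-{n - m}. 1 - (1 - real (n - j) / real n) ^ y)"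
      by (intro prod_ennreal) (auto intro!: power_le_one)
    also have "(\<Prod>j\<in>{..<n}-{n - m}. 1 - (1 - real (n - j) / real n) ^ y) = geom_cdf_others n m y"
      unfolding geom_cdf_others_def using m
      by (intro prod.reindex_bij_witness[where i="\<lambda>i. n - i" and j="\<lambda>j. n - j"]) auto
    finally show "(\<Prod>j\<in>{..<n}-{n - m}. emeasure (M j) {..y}) = ennreal (geom_cdf_others n m y)" .
  qed
  also have "\<dots> = (\<Sum>r. ennreal ((1 - p)^r * p * geom_cdf_others n m (Suc r)))"
    unfolding M_def p_def using m
    by (subst nn_integral_shifted_geometric)
      (auto simp: ennreal_mult'[symmetric] geom_cdf_others_nonneg mult.assoc)
  finally show ?thesis .
qed

lemma exp_expectation_le_pD:
  assumes m: "1 \<le> m" "m < n"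
  defines "p \<equiv> real m / real n"
  shows "exp_expectation (real n * - ln (1 - p)) (cdf_others m n) \<le> pD n m"
proof -
  have p: "0 < p" "p < 1" using m by (auto simp: p_def)
  have n: "0 < real n" using m by simp
  let ?h = "\<lambda>x. cdf_others m n (x / real n)"
  have h: "prob_valued ?h" "mono ?h"
    using prob_valued_scale[OF prob_valued_cdf_others, of m n "1 / real n"] mono_cdf_others_scaled[of "real n"]
    by auto
  have c: "0 < real n * - ln (1 - p)"
    using n p by (intro mult_pos_pos) auto
  have "exp_expectation (real n * - ln (1 - p)) (cdf_others m n) = exp_expectation (- ln (1 - p)) ?h"
    using exp_expectation_scale[of "1 / real n", OF _ c prob_valued_cdf_others] n by simp
  also have "ennreal \<dots> \<le> (\<Sum>r. ennreal ((1 - p) ^ r * p * ?h (real (Suc r))))"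
    by (rule exp_expectation_le_geometric_sum[OF p h])
  also have "\<dots> \<le> (\<Sum>r. ennreal ((1 - p) ^ r * p * geom_cdf_others n m (Suc r)))"
    using p by (intro suminf_le ennreal_leI mult_left_mono cdf_others_le_geom_cdf_others) auto
  also have "\<dots> = ennreal (pD n m)"
    using pD_eq_suminf[of m n] m by (simp add: p_def)
  finally show ?thesis
    by (simp add: ennreal_le_iff pD_nonneg)
qed

lemma pD_le_exp_expectation:
  assumes m: "1 \<le> m" "m \<le> K" and K: "K < n"
  defines "p \<equiv> real m / real n"
  shows "(1 - p) * pD n m \<le> exp_expectation (real (n - K) * - ln (1 - p)) (cdf_others m K)"
proof -
  have p: "0 < p" "p < 1" using m K by (auto simp: p_def)
  have nK: "0 < real (n - K)" using K by simp
  let ?h = "\<lambda>x. cdf_others m K (x / real (n - K))"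
  have h: "prob_valued ?h" "mono ?h"
    using prob_valued_scale[OF prob_valued_cdf_others, of m K "1 / real (n - K)"]
      mono_cdf_others_scaled[of "real (n - K)"]
    by auto
  have c: "0 < real (n - K) * - ln (1 - p)"
    using nK p by (intro mult_pos_pos) auto
  have scale: "exp_expectation (- ln (1 - p)) ?h = exp_expectation (real (n - K) * - ln (1 - p)) (cdf_others m K)"
    using exp_expectation_scale[of "1 / real (n - K)", OF _ c prob_valued_cdf_others] nK by simp
  have "ennreal ((1 - p) * pD n m) = ennreal (1 - p) * ennreal (pD n m)"
    using p by (simp add: ennreal_mult pD_nonneg)
  also have "\<dots> = ennreal (1 - p) * (\<Sum>r. ennreal ((1 - p) ^ r * p * geom_cdf_others n m (Suc r)))"
    using pD_eq_suminf[of m n] m K by (simp add: p_def)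
  also have "\<dots> \<le> ennreal (1 - p) * (\<Sum>r. ennreal ((1 - p) ^ r * p * ?h (real (Suc r))))"
    using p m K
    by (intro mult_left_mono suminf_le ennreal_leI mult_left_mono geom_cdf_others_le_cdf_others) auto
  also have "\<dots> \<le> ennreal (exp_expectation (- ln (1 - p)) ?h)"
    by (rule geometric_sum_le_exp_expectation[OF p h])
  finally show ?thesis
    using exp_expectation_nonneg[OF c prob_valued_cdf_others] by (simp add: scale)
qed

lemma pX_minus_le_pD:
  assumes m: "1 \<le> m" "2 * m \<le> n"
  shows "pX m - 2 * real m / real n \<le> pD n m"
proof -
  define p where "p = real m / real n"
  define c where "c = real n * - ln (1 - p)"
  have n: "0 < real m" "real m < real n" "2 * real m \<le> real n" using m by auto
  have p: "0 < p" "p < 1" using n by (auto simp: p_def)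
  have "real n * p \<le> c" "c \<le> real n * (p / (1 - p))"
    using mult_left_mono[OF minus_ln_one_minus_bounds(1), of p "real n"]
      mult_left_mono[OF minus_ln_one_minus_bounds(2), of p "real n"] p
    unfolding c_def by auto
  then have c: "real m \<le> c" "c - real m \<le> real m * real m / (real n - real m)"
    using n by (auto simp: p_def field_simps)
  have "\<bar>c - real m\<bar> / real m \<le> real m / (real n - real m)"
    using c n by (simp add: field_simps)
  also have "\<dots> \<le> 2 * real m / real n"
    using n by (simp add: field_simps)
  finally have close: "\<bar>c - real m\<bar> / real m \<le> 2 * real m / real n" .
  have "pX m \<le> exp_expectation (real m) (cdf_others m n)"
    using pX_le_pX_upto[OF m(1)] by (simp add: pX_upto_def)
  also have "\<dots> \<le> exp_expectation c (cdf_others m n) + \<bar>c - real m\<bar> / real m"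
    using abs_exp_expectation_diff_le[OF n(1) _ prob_valued_cdf_others, of c m n] n c by linarith
  also have "exp_expectation c (cdf_others m n) \<le> pD n m"
    unfolding c_def p_def using m by (intro exp_expectation_le_pD) auto
  finally show ?thesis
    using close by linarith
qed

lemma pD_le_pX_upto:
  assumes m: "1 \<le> m" "m \<le> K" and K: "K < n"
  shows "pD n m \<le> pX_upto m K + (real K + real m) / real n"
proof -
  define p where "p = real m / real n"
  define c where "c = real (n - K) * - ln (1 - p)"
  have n: "0 < real m" "real m \<le> real K" "real K < real n" using m K by auto
  have p: "0 < p" "p < 1" using n by (auto simp: p_def)
  have "real (n - K) * p \<le> c" "c \<le> real (n - K) * (p / (1 - p))"
    using mult_left_mono[OF minus_ln_one_minus_bounds(1), of p "real (n - K)"]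
      mult_left_mono[OF minus_ln_one_minus_bounds(2), of p "real (n - K)"] p
    unfolding c_def by auto
  then have "real m - real m * real K / real n \<le> c" "c \<le> real m * ((real n - real K) / (real n - real m))"
    using n by (auto simp: p_def of_nat_diff field_simps)
  moreover have "real m * ((real n - real K) / (real n - real m)) \<le> real m"
    using n by (intro mult_left_le) auto
  moreover have "real m * real K / real n < real m"
    using n by (simp add: field_simps)
  ultimately have c: "real m - real m * real K / real n \<le> c" "c \<le> real m" and c_pos: "0 < c"
    by linarith+
  have "\<bar>c - real m\<bar> / real m \<le> real K / real n"
    using c n by (simp add: abs_if field_simps)
  moreover have "exp_expectation c (cdf_others m K) - exp_expectation (real m) (cdf_others m K)
      \<le> \<bar>c - real m\<bar> / real m"
    using exp_expectation_diff_le[OF n(1) c_pos prob_valued_cdf_others] .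
  moreover have "(1 - p) * pD n m \<le> exp_expectation c (cdf_others m K)"
    unfolding c_def p_def using m K by (intro pD_le_exp_expectation)
  moreover have "p * pD n m \<le> p"
    using pD_le_1[of n m] p by (simp add: mult_left_le)
  ultimately show ?thesis
    by (simp add: pX_upto_def p_def add_divide_distrib algebra_simps)
qed

lemma pD_tendsto_pX:
  assumes m: "1 \<le> m"
  shows "(\<lambda>n. pD n m) \<longlonglongrightarrow> pX m"
proof (rule order_tendstoI)
  fix a assume a: "a < pX m"
  have "(\<lambda>n. pX m - 2 * real m / real n) \<longlonglongrightarrow> pX m"
    using tendsto_diff[OF tendsto_const lim_const_over_n[of "2 * real m"]] by simp
  from order_tendstoD(1)[OF this a]
  have "eventually (\<lambda>n. a < pX m - 2 * real m / real n) sequentially" .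
  with eventually_ge_at_top[of "2 * m"]
  show "eventually (\<lambda>n. a < pD n m) sequentially"
    by eventually_elim (use pX_minus_le_pD[OF m] in force)
next
  fix a assume a: "pX m < a"
  from order_tendstoD(2)[OF pX_upto_tendsto_pX[OF m] a]
  have "eventually (\<lambda>K. pX_upto m K < a) sequentially" .
  then obtain K where K: "m \<le> K" "pX_upto m K < a"
    by (metis eventually_at_top_linorder nat_le_linear max.cobounded1 max.cobounded2)
  have "(\<lambda>n. pX_upto m K + (real K + real m) / real n) \<longlonglongrightarrow> pX_upto m K"
    using tendsto_add[OF tendsto_const lim_const_over_n[of "real K + real m"]] by simp
  from order_tendstoD(2)[OF this K(2)]
  have "eventually (\<lambda>n. pX_upto m K + (real K + real m) / real n < a) sequentially" .
  with eventually_gt_at_top[of K]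
  show "eventually (\<lambda>n. pD n m < a) sequentially"
    by eventually_elim (use pD_le_pX_upto[OF m K(1)] in force)
qed

theorem proposition7:
  fixes m :: nat
  assumes "m \<ge> 1"
  shows "(\<lambda>n. pW n m - pX m) \<in> O(\<lambda>n. 1 / real n) \<and>
         (\<lambda>n. pD n m) \<longlonglongrightarrow> pX m"
  using pW_minus_pX_bigo[OF assms] pD_tendsto_pX[OF assms] by simp

end
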